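(* Let $\mathsf V$ be a variety, $h:\mathbf F_{\mathsf V}(z)\to\prod_{k=1}^m\mathbf E_k$ an algebraic e-generalization problem, and $\theta$ a congruence of $\mathbf F_{\mathsf V}(z)$. Then: (1) if $\theta\in\mathscr G(h)$, then $\theta$ is exact and $\theta\subseteq\ker(h)$; (2) if $\theta$ is projective and $\theta\subseteq\ker(h)$, then $\theta\in\mathscr G(h)$.
   Context: $\mathbf F_{\mathsf V}(z)$ is the free algebra of the variety $\mathsf V$ on one generator $z$. An algebra is projective in $\mathsf V$ iff it is a retract of a free algebra of $\mathsf V$ (there are homomorphisms $i:\mathbf P\to\mathbf F_{\mathsf V}(Y)$, $j:\mathbf F_{\mathsf V}(Y)\to\mathbf P$ with $j\circ i=\mathrm{id}$); it is exact in $\mathsf V$ if isomorphic to a finitely generated subalgebra of a finitely generated free algebra of $\mathsf V$. A congruence $\theta$ of $\mathbf F_{\mathsf V}(z)$ is exact (resp. projective) if $\mathbf F_{\mathsf V}(z)/\theta$ is exact (resp. projective) in $\mathsf V$. An algebraic e-generalization problem is a homomorphism $h:\mathbf F_{\mathsf V}(z)\to\prod_{k=1}^m\mathbf E_k$ with each $\mathbf E_k$ a 1-generated exact algebra and $p_k\circ h$ surjective for each projection $p_k$. A solution of $h$ is a homomorphism $g:\mathbf F_{\mathsf V}(z)\to\mathbf P$ with $\mathbf P$ finitely generated and projective in $\mathsf V$ such that $f\circ g=h$ for some homomorphism $f:\mathbf P\to\prod_k\mathbf E_k$. $\ker(g)=\{(a,a'):g(a)=g(a')\}$. $\mathscr G(h)$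 is the set of G-congruences of $h$, i.e. $\{\ker(g): g \text{ a solution of } h\}$. *)

theory Defs
  imports Main
begin

record ('f, 'a) alg =
  carrier :: "'a set"
  ops :: "'f \<Rightarrow> 'a list \<Rightarrow> 'a"

definition algebra :: "('f \<Rightarrow> nat) \<Rightarrow> ('f, 'a) alg \<Rightarrow> bool" where
  "algebra ar A \<longleftrightarrow>
     (\<forall>f xs. length xs = ar f \<and> set xs \<subseteq> carrier A \<longrightarrow> ops A f xs \<in> carrier A)"

definition hom :: "('f \<Rightarrow> nat) \<Rightarrow> ('f, 'a) alg \<Rightarrow> ('f, 'b) alg \<Rightarrow> ('a \<Rightarrow> 'b) \<Rightarrow> bool" where
  "hom ar A B h \<longleftrightarrow>
     (\<forall>x\<in>carrier A. h x \<in> carrier B) \<and>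
     (\<forall>f xs. length xs = ar f \<and> set xs \<subseteq> carrier A \<longrightarrow> h (ops A f xs) = ops B f (map h xs))"

definition iso :: "('f \<Rightarrow> nat) \<Rightarrow> ('f, 'a) alg \<Rightarrow> ('f, 'b) alg \<Rightarrow> bool" where
  "iso ar A B \<longleftrightarrow> (\<exists>\<phi>. hom ar A B \<phi> \<and> bij_betw \<phi> (carrier A) (carrier B))"

definition closed :: "('f \<Rightarrow> nat) \<Rightarrow> ('f, 'a) alg \<Rightarrow> 'a set \<Rightarrow> bool" where
  "closed ar A S \<longleftrightarrow> (\<forall>f xs. length xs = ar f \<and> set xs \<subseteq> S \<longrightarrow> ops A f xs \<in> S)"

definition Sg :: "('f \<Rightarrow> nat) \<Rightarrow> ('f, 'a) alg \<Rightarrow> 'a set \<Rightarrow> 'a set" where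
  "Sg ar A X = \<Inter>{S. X \<subseteq> S \<and> S \<subseteq> carrier A \<and> closed ar A S}"

definition subalg :: "('f, 'a) alg \<Rightarrow> 'a set \<Rightarrow> ('f, 'a) alg" where
  "subalg A S = \<lparr>carrier = S, ops = ops A\<rparr>"

definition fin_gen :: "('f \<Rightarrow> nat) \<Rightarrow> ('f, 'a) alg \<Rightarrow> bool" where
  "fin_gen ar A \<longleftrightarrow> (\<exists>X. finite X \<and> X \<subseteq> carrier A \<and> Sg ar A X = carrier A)"

definition one_gen :: "('f \<Rightarrow> nat) \<Rightarrow> ('f, 'a) alg \<Rightarrow> bool" where
  "one_gen ar A \<longleftrightarrow> (\<exists>a\<in>carrier A. Sg ar A {a} = carrier A)"

definition congruence :: "('f \<Rightarrow> nat) \<Rightarrow> ('f, 'a) alg \<Rightarrow> ('a \<times> 'a) set \<Rightarrow> bool" where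
  "congruence ar A \<theta> \<longleftrightarrow> equiv (carrier A) \<theta> \<and>
     (\<forall>f xs ys. length xs = ar f \<and> list_all2 (\<lambda>x y. (x, y) \<in> \<theta>) xs ys
        \<longrightarrow> (ops A f xs, ops A f ys) \<in> \<theta>)"

definition quot_alg :: "('f, 'a) alg \<Rightarrow> ('a \<times> 'a) set \<Rightarrow> ('f, 'a set) alg" where
  "quot_alg A \<theta> = \<lparr>carrier = carrier A // \<theta>,
     ops = (\<lambda>f Xs. \<theta> `` {ops A f (map (\<lambda>X. SOME x. x \<in> X) Xs)})\<rparr>"

definition ker :: "('f, 'a) alg \<Rightarrow> ('a \<Rightarrow> 'b) \<Rightarrow> ('a \<times> 'a) set" where
  "ker A g = {(a, a'). a \<in> carrier A \<and> a' \<in> carrier A \<and> g a = g a'}"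

text \<open>Product of the algebras E 0, ..., E (m-1) (indices shifted from 1..m to 0..m-1),
  with extensional tuples.\<close>
definition prod_alg :: "nat \<Rightarrow> (nat \<Rightarrow> ('f, 'e) alg) \<Rightarrow> ('f, nat \<Rightarrow> 'e) alg" where
  "prod_alg m E = \<lparr>carrier = {x. (\<forall>k<m. x k \<in> carrier (E k)) \<and> (\<forall>k\<ge>m. x k = undefined)},
     ops = (\<lambda>f xs k. if k < m then ops (E k) f (map (\<lambda>x. x k) xs) else undefined)\<rparr>"

datatype ('f, 'v) trm = Var 'v | Fn 'f "('f, 'v) trm list"

fun wf_trm :: "('f \<Rightarrow> nat) \<Rightarrow> ('f, 'v) trm \<Rightarrow> bool" where
  "wf_trm ar (Var v) = True"
| "wf_trm ar (Fn f ts) = (length ts = ar f \<and> (\<forall>t\<in>set ts. wf_trm ar t))"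

fun vars :: "('f, 'v) trm \<Rightarrow> 'v set" where
  "vars (Var v) = {v}"
| "vars (Fn f ts) = (\<Union>t\<in>set ts. vars t)"

fun subst :: "('v \<Rightarrow> ('f, 'w) trm) \<Rightarrow> ('f, 'v) trm \<Rightarrow> ('f, 'w) trm" where
  "subst \<sigma> (Var v) = \<sigma> v"
| "subst \<sigma> (Fn f ts) = Fn f (map (subst \<sigma>) ts)"

text \<open>A variety is given (Birkhoff) by a set of identities over the signature ar.\<close>
definition variety :: "('f \<Rightarrow> nat) \<Rightarrow> (('f, nat) trm \<times> ('f, nat) trm) set \<Rightarrow> bool" where
  "variety ar Eqs \<longleftrightarrow> (\<forall>(s, t)\<in>Eqs. wf_trm ar s \<and> wf_trm ar t)"

inductive eqcons :: "('f \<Rightarrow> nat) \<Rightarrow> (('f, nat) trm \<times> ('f, nat) trm) set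
    \<Rightarrow> ('f, 'v) trm \<Rightarrow> ('f, 'v) trm \<Rightarrow> bool"
  for ar Eqs where
  ax: "(s, t) \<in> Eqs \<Longrightarrow> (\<forall>v. wf_trm ar (\<sigma> v)) \<Longrightarrow> eqcons ar Eqs (subst \<sigma> s) (subst \<sigma> t)"
| refl: "wf_trm ar t \<Longrightarrow> eqcons ar Eqs t t"
| sym: "eqcons ar Eqs s t \<Longrightarrow> eqcons ar Eqs t s"
| trans: "eqcons ar Eqs s t \<Longrightarrow> eqcons ar Eqs t u \<Longrightarrow> eqcons ar Eqs s u"
| cong: "length ss = ar f \<Longrightarrow> list_all2 (eqcons ar Eqs) ss ts \<Longrightarrow> eqcons ar Eqs (Fn f ss) (Fn f ts)"

definition free_terms :: "('f \<Rightarrow> nat) \<Rightarrow> 'v set \<Rightarrow> ('f, 'v) trm set" where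
  "free_terms ar Y = {t. wf_trm ar t \<and> vars t \<subseteq> Y}"

definition fclass :: "('f \<Rightarrow> nat) \<Rightarrow> (('f, nat) trm \<times> ('f, nat) trm) set \<Rightarrow> 'v set
    \<Rightarrow> ('f, 'v) trm \<Rightarrow> ('f, 'v) trm set" where
  "fclass ar Eqs Y t = {s \<in> free_terms ar Y. eqcons ar Eqs s t}"

definition free_alg :: "('f \<Rightarrow> nat) \<Rightarrow> (('f, nat) trm \<times> ('f, nat) trm) set \<Rightarrow> 'v set
    \<Rightarrow> ('f, ('f, 'v) trm set) alg" where
  "free_alg ar Eqs Y = \<lparr>carrier = fclass ar Eqs Y ` free_terms ar Y,
     ops = (\<lambda>f cs. fclass ar Eqs Y (Fn f (map (\<lambda>c. SOME t. t \<in> c) cs)))\<rparr>"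

text \<open>F_V(z): free algebra on one generator (the unique element of type unit).\<close>
definition Fz :: "('f \<Rightarrow> nat) \<Rightarrow> (('f, nat) trm \<times> ('f, nat) trm) set \<Rightarrow> ('f, ('f, unit) trm set) alg" where
  "Fz ar Eqs = free_alg ar Eqs (UNIV :: unit set)"

definition exact :: "('f \<Rightarrow> nat) \<Rightarrow> (('f, nat) trm \<times> ('f, nat) trm) set \<Rightarrow> ('f, 'a) alg \<Rightarrow> bool" where
  "exact ar Eqs E \<longleftrightarrow> algebra ar E \<and>
     (\<exists>(Y :: nat set) X. finite Y \<and> finite X \<and> X \<subseteq> carrier (free_alg ar Eqs Y) \<and>
        iso ar E (subalg (free_alg ar Eqs Y) (Sg ar (free_alg ar Eqs Y) X)))"

text \<open>Retract of a free algebra; generators range over sets of the carrier type of P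
  (which suffices: a projective P is a retract of F_V(carrier P)).\<close>
definition projective :: "('f \<Rightarrow> nat) \<Rightarrow> (('f, nat) trm \<times> ('f, nat) trm) set \<Rightarrow> ('f, 'a) alg \<Rightarrow> bool" where
  "projective ar Eqs P \<longleftrightarrow> algebra ar P \<and>
     (\<exists>(Y :: 'a set) i j. hom ar P (free_alg ar Eqs Y) i \<and> hom ar (free_alg ar Eqs Y) P j \<and>
        (\<forall>x\<in>carrier P. j (i x) = x))"

definition exact_cong :: "('f \<Rightarrow> nat) \<Rightarrow> (('f, nat) trm \<times> ('f, nat) trm) set
    \<Rightarrow> (('f, unit) trm set \<times> ('f, unit) trm set) set \<Rightarrow> bool" where
  "exact_cong ar Eqs \<theta> \<longleftrightarrow> exact ar Eqs (quot_alg (Fz ar Eqs) \<theta>)"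

definition projective_cong :: "('f \<Rightarrow> nat) \<Rightarrow> (('f, nat) trm \<times> ('f, nat) trm) set
    \<Rightarrow> (('f, unit) trm set \<times> ('f, unit) trm set) set \<Rightarrow> bool" where
  "projective_cong ar Eqs \<theta> \<longleftrightarrow> projective ar Eqs (quot_alg (Fz ar Eqs) \<theta>)"

definition egen_problem :: "('f \<Rightarrow> nat) \<Rightarrow> (('f, nat) trm \<times> ('f, nat) trm) set \<Rightarrow> nat
    \<Rightarrow> (nat \<Rightarrow> ('f, 'e) alg) \<Rightarrow> (('f, unit) trm set \<Rightarrow> nat \<Rightarrow> 'e) \<Rightarrow> bool" where
  "egen_problem ar Eqs m E h \<longleftrightarrow>
     (\<forall>k<m. one_gen ar (E k) \<and> exact ar Eqs (E k)) \<and>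
     hom ar (Fz ar Eqs) (prod_alg m E) h \<and>
     (\<forall>k<m. (\<lambda>x. h x k) ` carrier (Fz ar Eqs) = carrier (E k))"

text \<open>Solutions: the projective algebra P is taken (up to isomorphism) with carrier in the
  type of elements of free algebras over countably many variables.\<close>
definition solution :: "('f \<Rightarrow> nat) \<Rightarrow> (('f, nat) trm \<times> ('f, nat) trm) set \<Rightarrow> nat
    \<Rightarrow> (nat \<Rightarrow> ('f, 'e) alg) \<Rightarrow> (('f, unit) trm set \<Rightarrow> nat \<Rightarrow> 'e)
    \<Rightarrow> (('f, unit) trm set \<Rightarrow> ('f, nat) trm set) \<Rightarrow> ('f, ('f, nat) trm set) alg \<Rightarrow> bool" where
  "solution ar Eqs m E h g P \<longleftrightarrow>
     fin_gen ar P \<and> projective ar Eqs P \<and> hom ar (Fz ar Eqs) P g \<and>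
     (\<exists>f. hom ar P (prod_alg m E) f \<and> (\<forall>x\<in>carrier (Fz ar Eqs). f (g x) = h x))"

definition G_congs :: "('f \<Rightarrow> nat) \<Rightarrow> (('f, nat) trm \<times> ('f, nat) trm) set \<Rightarrow> nat
    \<Rightarrow> (nat \<Rightarrow> ('f, 'e) alg) \<Rightarrow> (('f, unit) trm set \<Rightarrow> nat \<Rightarrow> 'e)
    \<Rightarrow> (('f, unit) trm set \<times> ('f, unit) trm set) set set" where
  "G_congs ar Eqs m E h = {ker (Fz ar Eqs) g | g P. solution ar Eqs m E h g P}"

end

theory Submission
  imports Defs
begin

text \<open>
  A homomorphism from \<open>F(z)\<close> into a free algebra is the substitution \<open>z \<mapsto> t\<close>; renaming the
  finitely many variables of \<open>t\<close> into \<open>nat\<close> keeps its kernel, and its image is the subalgebra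
  generated by \<open>t\<close>, so the kernel is exact. The kernel of a solution \<open>g : F(z) \<rightarrow> P\<close> is of this
  form, since composing \<open>g\<close> with the embedding of \<open>P\<close> into a free algebra does not change it, and
  \<open>f \<circ> g = h\<close> gives \<open>ker g \<subseteq> ker h\<close>. Conversely, if \<open>F(z)/\<theta>\<close> is projective, embedding it into
  a free algebra and renaming as above yields a finitely generated subalgebra \<open>P \<cong> F(z)/\<theta>\<close> of a
  free algebra. \<open>P\<close> is projective because the quotient map \<open>F(z) \<rightarrow> F(z)/\<theta>\<close> splits (lift along
  it through the free algebra of which \<open>F(z)/\<theta>\<close> is a retract), and \<open>h\<close> factors through \<open>P\<close>
  since \<open>\<theta> \<subseteq> ker h\<close>.
\<close>

section \<open>Terms and substitutions\<close>

lemma subst_subst: "subst \<sigma> (subst \<tau> t) = subst (\<lambda>v. subst \<sigma> (\<tau> v)) t"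
  by (induction t) auto

lemma subst_Var_id: "subst Var t = t"
  by (induction t) (auto intro: map_idI)

lemma subst_cong: "(\<And>v. v \<in> vars t \<Longrightarrow> \<sigma> v = \<tau> v) \<Longrightarrow> subst \<sigma> t = subst \<tau> t"
  by (induction t) auto

lemma vars_subst: "vars (subst \<sigma> t) = (\<Union>v\<in>vars t. vars (\<sigma> v))"
  by (induction t) auto

lemma wf_trm_subst:
  "wf_trm ar t \<Longrightarrow> (\<And>v. v \<in> vars t \<Longrightarrow> wf_trm ar (\<sigma> v)) \<Longrightarrow> wf_trm ar (subst \<sigma> t)"
  by (induction t) auto

lemma finite_vars: "finite (vars t)"
  by (induction t) auto

lemma subst_rename_inverse:
  assumes "inj_on \<beta> V" "vars t \<subseteq> V"
  shows "subst (\<lambda>v. Var (inv_into V \<beta> v)) (subst (\<lambda>v. Var (\<beta> v)) t) = t"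
proof -
  have "subst (\<lambda>v. Var (inv_into V \<beta> v)) (subst (\<lambda>v. Var (\<beta> v)) t)
      = subst (\<lambda>v. Var (inv_into V \<beta> (\<beta> v))) t"
    by (simp add: subst_subst)
  also have "\<dots> = subst Var t"
    using assms by (intro subst_cong) auto
  finally show ?thesis by (simp add: subst_Var_id)
qed

lemma eqcons_subst:
  "eqcons ar Eqs s t \<Longrightarrow> (\<And>v. wf_trm ar (\<sigma> v)) \<Longrightarrow> eqcons ar Eqs (subst \<sigma> s) (subst \<sigma> t)"
proof (induction rule: eqcons.induct)
  case (ax s t \<tau>)
  have "eqcons ar Eqs (subst (\<lambda>v. subst \<sigma> (\<tau> v)) s) (subst (\<lambda>v. subst \<sigma> (\<tau> v)) t)"
    using ax by (intro eqcons.ax) (auto intro!: wf_trm_subst)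
  then show ?case by (simp add: subst_subst)
next
  case (cong ss f ts)
  then show ?case
    by (auto intro!: eqcons.cong simp: list_all2_map1 list_all2_map2 elim: list_all2_mono)
qed (auto intro: eqcons.intros wf_trm_subst)

lemma eqcons_rename_iff:
  assumes "inj_on \<beta> V" "vars s \<subseteq> V" "vars t \<subseteq> V"
  shows "eqcons ar Eqs (subst (\<lambda>v. Var (\<beta> v)) s) (subst (\<lambda>v. Var (\<beta> v)) t) \<longleftrightarrow>
    eqcons ar Eqs s t"
proof
  assume "eqcons ar Eqs (subst (\<lambda>v. Var (\<beta> v)) s) (subst (\<lambda>v. Var (\<beta> v)) t)"
  then have "eqcons ar Eqs (subst (\<lambda>v. Var (inv_into V \<beta> v)) (subst (\<lambda>v. Var (\<beta> v)) s))
      (subst (\<lambda>v. Var (inv_into V \<beta> v)) (subst (\<lambda>v. Var (\<beta> v)) t))"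
    by (rule eqcons_subst) simp
  then show "eqcons ar Eqs s t"
    using assms by (simp add: subst_rename_inverse)
qed (rule eqcons_subst; simp)

section \<open>Free algebras\<close>

lemma Var_in_free_terms: "y \<in> Y \<Longrightarrow> Var y \<in> free_terms ar Y"
  by (simp add: free_terms_def)

lemma Fn_in_free_terms:
  "length us = ar f \<Longrightarrow> set us \<subseteq> free_terms ar Y \<Longrightarrow> Fn f us \<in> free_terms ar Y"
  by (auto simp: free_terms_def)

lemma subst_in_free_terms:
  "u \<in> free_terms ar X \<Longrightarrow> (\<And>x. x \<in> X \<Longrightarrow> \<sigma> x \<in> free_terms ar Y) \<Longrightarrow>
    subst \<sigma> u \<in> free_terms ar Y"
  by (auto simp: free_terms_def vars_subst intro!: wf_trm_subst)

lemma fclass_self: "u \<in> free_terms ar Y \<Longrightarrow> u \<in> fclass ar Eqs Y u"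
  by (auto simp: fclass_def free_terms_def intro: eqcons.refl)

lemma fclass_eq_iff:
  assumes "u \<in> free_terms ar Y" "u' \<in> free_terms ar Y"
  shows "fclass ar Eqs Y u = fclass ar Eqs Y u' \<longleftrightarrow> eqcons ar Eqs u u'"
proof
  assume "fclass ar Eqs Y u = fclass ar Eqs Y u'"
  then show "eqcons ar Eqs u u'" using fclass_self[OF assms(1)] by (auto simp: fclass_def)
qed (auto simp: fclass_def intro: eqcons.trans eqcons.sym)

lemma carrier_free_alg: "carrier (free_alg ar Eqs Y) = fclass ar Eqs Y ` free_terms ar Y"
  by (simp add: free_alg_def)

lemma free_alg_rep:
  assumes "c \<in> carrier (free_alg ar Eqs Y)"
  shows "(SOME t. t \<in> c) \<in> free_terms ar Y" "fclass ar Eqs Y (SOME t. t \<in> c) = c"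
proof -
  obtain u where u: "u \<in> free_terms ar Y" "c = fclass ar Eqs Y u"
    using assms by (auto simp: carrier_free_alg)
  then have "(SOME t. t \<in> c) \<in> c" using fclass_self by (metis someI)
  then have "(SOME t. t \<in> c) \<in> free_terms ar Y" "eqcons ar Eqs (SOME t. t \<in> c) u"
    using u by (auto simp: fclass_def)
  then show "(SOME t. t \<in> c) \<in> free_terms ar Y" "fclass ar Eqs Y (SOME t. t \<in> c) = c"
    using u fclass_eq_iff by metis+
qed

lemma ops_free_alg_fclass:
  assumes "length us = ar f" "set us \<subseteq> free_terms ar Y"
  shows "ops (free_alg ar Eqs Y) f (map (fclass ar Eqs Y) us) = fclass ar Eqs Y (Fn f us)"
proof -
  let ?reps = "map (\<lambda>c. SOME t. t \<in> c) (map (fclass ar Eqs Y) us)"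
  have reps: "(SOME t. t \<in> fclass ar Eqs Y u) \<in> fclass ar Eqs Y u" if "u \<in> set us" for u
    using that assms fclass_self by (meson someI subsetD)
  have "list_all2 (eqcons ar Eqs) ?reps us"
    using reps by (auto simp: list_all2_map1 list_all2_same fclass_def)
  then have "eqcons ar Eqs (Fn f ?reps) (Fn f us)"
    using assms by (intro eqcons.cong) auto
  moreover have "Fn f ?reps \<in> free_terms ar Y"
    using assms reps by (intro Fn_in_free_terms) (auto simp: fclass_def)
  ultimately show ?thesis
    using assms by (simp add: free_alg_def fclass_eq_iff Fn_in_free_terms)
qed

lemma algebra_free_alg: "algebra ar (free_alg ar Eqs Y)"
  unfolding algebra_def
proof (intro allI impI)
  fix f cs assume "length cs = ar f \<and> set cs \<subseteq> carrier (free_alg ar Eqs Y)"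
  then have "Fn f (map (\<lambda>c. SOME t. t \<in> c) cs) \<in> free_terms ar Y"
    by (intro Fn_in_free_terms) (auto dest: free_alg_rep)
  then show "ops (free_alg ar Eqs Y) f cs \<in> carrier (free_alg ar Eqs Y)"
    by (simp add: free_alg_def)
qed

lemma free_alg_induct [consumes 1, case_names Var Fn]:
  assumes "x \<in> carrier (free_alg ar Eqs Y)"
    and "\<And>y. y \<in> Y \<Longrightarrow> P (fclass ar Eqs Y (Var y))"
    and "\<And>f us. length us = ar f \<Longrightarrow> set us \<subseteq> free_terms ar Y \<Longrightarrow>
      (\<And>u. u \<in> set us \<Longrightarrow> P (fclass ar Eqs Y u)) \<Longrightarrow>
      P (ops (free_alg ar Eqs Y) f (map (fclass ar Eqs Y) us))"
  shows "P x"
proof -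
  have "u \<in> free_terms ar Y \<longrightarrow> P (fclass ar Eqs Y u)" for u
  proof (induction u)
    case (Fn f us)
    then show ?case
      using assms(3)[of us f] by (auto simp: free_terms_def ops_free_alg_fclass)
  qed (use assms(2) in \<open>auto simp: free_terms_def\<close>)
  then show ?thesis using assms(1) by (auto simp: carrier_free_alg)
qed

lemma free_alg_hom_eqI:
  assumes "hom ar (free_alg ar Eqs Y) B \<phi>" "hom ar (free_alg ar Eqs Y) B \<psi>"
    and "\<And>y. y \<in> Y \<Longrightarrow> \<phi> (fclass ar Eqs Y (Var y)) = \<psi> (fclass ar Eqs Y (Var y))"
    and "x \<in> carrier (free_alg ar Eqs Y)"
  shows "\<phi> x = \<psi> x"
  using assms(4)
proof (induction rule: free_alg_induct)
  case (Fn f us)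
  have "set (map (fclass ar Eqs Y) us) \<subseteq> carrier (free_alg ar Eqs Y)"
    using Fn.hyps(2) by (auto simp: carrier_free_alg)
  moreover have "map \<phi> (map (fclass ar Eqs Y) us) = map \<psi> (map (fclass ar Eqs Y) us)"
    using Fn.IH by simp
  ultimately show ?case
    using assms(1,2) Fn.hyps(1) unfolding hom_def by (metis length_map)
qed (rule assms(3))

lemma free_alg_image_subset:
  assumes "hom ar (free_alg ar Eqs Y) B \<phi>" "closed ar B S"
    and "\<And>y. y \<in> Y \<Longrightarrow> \<phi> (fclass ar Eqs Y (Var y)) \<in> S"
    and "x \<in> carrier (free_alg ar Eqs Y)"
  shows "\<phi> x \<in> S"
  using assms(4)
proof (induction rule: free_alg_induct)
  case (Fn f us)
  have "set (map (fclass ar Eqs Y) us) \<subseteq> carrier (free_alg ar Eqs Y)"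
    using Fn.hyps(2) by (auto simp: carrier_free_alg)
  moreover have "set (map \<phi> (map (fclass ar Eqs Y) us)) \<subseteq> S"
    using Fn.IH by auto
  ultimately show ?case
    using assms(1,2) Fn.hyps(1) unfolding hom_def closed_def by (metis length_map)
qed (rule assms(3))

definition subst_hom :: "('f \<Rightarrow> nat) \<Rightarrow> (('f, nat) trm \<times> ('f, nat) trm) set \<Rightarrow> 'w set
    \<Rightarrow> ('v \<Rightarrow> ('f, 'w) trm) \<Rightarrow> ('f, 'v) trm set \<Rightarrow> ('f, 'w) trm set" where
  "subst_hom ar Eqs Y \<sigma> c = fclass ar Eqs Y (subst \<sigma> (SOME t. t \<in> c))"

lemma subst_hom_fclass:
  assumes "\<And>x. x \<in> X \<Longrightarrow> \<sigma> x \<in> free_terms ar Y" "\<And>x. wf_trm ar (\<sigma> x)"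
    and "u \<in> free_terms ar X"
  shows "subst_hom ar Eqs Y \<sigma> (fclass ar Eqs X u) = fclass ar Eqs Y (subst \<sigma> u)"
proof -
  let ?t = "SOME t. t \<in> fclass ar Eqs X u"
  have "fclass ar Eqs X u \<in> carrier (free_alg ar Eqs X)"
    using assms(3) by (simp add: carrier_free_alg)
  then have "?t \<in> free_terms ar X" "eqcons ar Eqs ?t u"
    using free_alg_rep assms(3) fclass_eq_iff by metis+
  then show ?thesis
    using assms by (simp add: subst_hom_def fclass_eq_iff eqcons_subst subst_in_free_terms)
qed

lemma hom_subst_hom:
  assumes "\<And>x. x \<in> X \<Longrightarrow> \<sigma> x \<in> free_terms ar Y" "\<And>x. wf_trm ar (\<sigma> x)"
  shows "hom ar (free_alg ar Eqs X) (free_alg ar Eqs Y) (subst_hom ar Eqs Y \<sigma>)"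
  unfolding hom_def
proof (intro conjI ballI allI impI)
  fix c assume "c \<in> carrier (free_alg ar Eqs X)"
  then show "subst_hom ar Eqs Y \<sigma> c \<in> carrier (free_alg ar Eqs Y)"
    using assms by (auto simp: carrier_free_alg subst_hom_fclass subst_in_free_terms)
next
  fix f cs assume cs: "length cs = ar f \<and> set cs \<subseteq> carrier (free_alg ar Eqs X)"
  let ?us = "map (\<lambda>c. SOME t. t \<in> c) cs"
  have us: "length ?us = ar f" "set ?us \<subseteq> free_terms ar X"
    using cs by (auto dest: free_alg_rep)
  have cs_eq: "cs = map (fclass ar Eqs X) ?us"
    unfolding map_map by (rule map_idI[symmetric]) (use cs in \<open>auto simp: free_alg_rep\<close>)
  have us_subst: "set (map (subst \<sigma>) ?us) \<subseteq> free_terms ar Y"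
    using us assms by (auto intro: subst_in_free_terms)
  have "subst_hom ar Eqs Y \<sigma> (ops (free_alg ar Eqs X) f cs)
      = subst_hom ar Eqs Y \<sigma> (fclass ar Eqs X (Fn f ?us))"
    using ops_free_alg_fclass[OF us] cs_eq by metis
  also have "\<dots> = fclass ar Eqs Y (Fn f (map (subst \<sigma>) ?us))"
    using us assms by (simp add: subst_hom_fclass Fn_in_free_terms)
  also have "\<dots> = ops (free_alg ar Eqs Y) f (map (fclass ar Eqs Y) (map (subst \<sigma>) ?us))"
    using us us_subst ops_free_alg_fclass[where us="map (subst \<sigma>) ?us" and f=f and Y=Y] by simp
  also have "map (fclass ar Eqs Y) (map (subst \<sigma>) ?us) = map (subst_hom ar Eqs Y \<sigma>) cs"
    using us assms by (subst (2) cs_eq) (auto simp: subst_hom_fclass)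
  finally show "subst_hom ar Eqs Y \<sigma> (ops (free_alg ar Eqs X) f cs) =
      ops (free_alg ar Eqs Y) f (map (subst_hom ar Eqs Y \<sigma>) cs)" .
qed

section \<open>Homomorphisms, quotients and retracts\<close>

lemma hom_comp: "hom ar A B f \<Longrightarrow> hom ar B C g \<Longrightarrow> hom ar A C (\<lambda>x. g (f x))"
  unfolding hom_def
proof (intro conjI ballI allI impI; elim conjE)
  fix f' xs
  assume "\<forall>x\<in>carrier A. f x \<in> carrier B"
    and "\<forall>f' xs. length xs = ar f' \<and> set xs \<subseteq> carrier A \<longrightarrow> f (ops A f' xs) = ops B f' (map f xs)"
    and "\<forall>f' xs. length xs = ar f' \<and> set xs \<subseteq> carrier B \<longrightarrow> g (ops B f' xs) = ops C f' (map g xs)"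
    and "length xs = ar f'" "set xs \<subseteq> carrier A"
  moreover have "set (map f xs) \<subseteq> carrier B" "length (map f xs) = ar f'"
    using calculation by auto
  ultimately show "g (f (ops A f' xs)) = ops C f' (map (\<lambda>x. g (f x)) xs)"
    by (simp add: comp_def)
qed auto

lemma map_inv_into:
  assumes "set bs \<subseteq> \<psi> ` A"
  shows "map \<psi> (map (inv_into A \<psi>) bs) = bs" "set (map (inv_into A \<psi>) bs) \<subseteq> A"
proof -
  show "map \<psi> (map (inv_into A \<psi>) bs) = bs"
    using assms by (simp, intro map_idI) (auto intro: f_inv_into_f)
  show "set (map (inv_into A \<psi>) bs) \<subseteq> A"
    using assms by (auto intro: inv_into_into)
qed

lemma closed_hom_image:
  assumes "hom ar A B \<psi>" "algebra ar A"
  shows "closed ar B (\<psi> ` carrier A)"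
  unfolding closed_def
proof (intro allI impI)
  fix f bs assume bs: "length bs = ar f \<and> set bs \<subseteq> \<psi> ` carrier A"
  let ?xs = "map (inv_into (carrier A) \<psi>) bs"
  have "ops B f bs = \<psi> (ops A f ?xs)"
    using assms bs map_inv_into[of bs \<psi>] unfolding hom_def by auto
  then show "ops B f bs \<in> \<psi> ` carrier A"
    using assms bs map_inv_into(2)[of bs \<psi>] unfolding algebra_def by auto
qed

lemma hom_onto_image: "hom ar A B \<psi> \<Longrightarrow> hom ar A (subalg B (\<psi> ` carrier A)) \<psi>"
  by (auto simp: hom_def subalg_def)

lemma algebra_subalg: "closed ar B S \<Longrightarrow> algebra ar (subalg B S)"
  by (auto simp: algebra_def closed_def subalg_def)

lemma closed_subalg_iff: "closed ar (subalg B I) S \<longleftrightarrow> closed ar B S"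
  by (simp add: closed_def subalg_def)

lemma carrier_subalg [simp]: "carrier (subalg B S) = S"
  by (simp add: subalg_def)

lemma subalg_carrier: "subalg A (carrier A) = A"
  by (simp add: subalg_def)

lemma Sg_eqI:
  assumes "X \<subseteq> I" "I \<subseteq> carrier B" "closed ar B I"
    and "\<And>S. X \<subseteq> S \<Longrightarrow> closed ar B S \<Longrightarrow> I \<subseteq> S"
  shows "Sg ar B X = I"
  unfolding Sg_def using assms by (intro antisym Inter_lower Inter_greatest) auto

lemma hom_factor_through_image:
  assumes \<psi>: "hom ar A B \<psi>" and q: "hom ar A C q" and "algebra ar A"
    and ker: "ker A \<psi> \<subseteq> ker A q"
  obtains \<phi> where "hom ar (subalg B (\<psi> ` carrier A)) C \<phi>"
    and "\<And>x. x \<in> carrier A \<Longrightarrow> \<phi> (\<psi> x) = q x"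
proof
  let ?\<phi> = "\<lambda>p. q (inv_into (carrier A) \<psi> p)"
  show factor: "?\<phi> (\<psi> x) = q x" if "x \<in> carrier A" for x
    using that ker inv_into_into[of "\<psi> x" \<psi> "carrier A"] f_inv_into_f[of "\<psi> x" \<psi> "carrier A"]
    unfolding ker_def by blast
  show "hom ar (subalg B (\<psi> ` carrier A)) C ?\<phi>"
    unfolding hom_def
  proof (intro conjI ballI allI impI)
    fix p assume "p \<in> carrier (subalg B (\<psi> ` carrier A))"
    then show "?\<phi> p \<in> carrier C"
      using q by (auto simp: subalg_def hom_def inv_into_into)
  next
    fix f ps assume ps: "length ps = ar f \<and> set ps \<subseteq> carrier (subalg B (\<psi> ` carrier A))"
    let ?xs = "map (inv_into (carrier A) \<psi>) ps"
    have xs: "map \<psi> ?xs = ps" "set ?xs \<subseteq> carrier A"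
      using ps map_inv_into[of ps \<psi> "carrier A"] by (auto simp: subalg_def)
    have "ops A f ?xs \<in> carrier A"
      using \<open>algebra ar A\<close> ps xs unfolding algebra_def by simp
    moreover have "ops (subalg B (\<psi> ` carrier A)) f ps = \<psi> (ops A f ?xs)"
      using \<psi> ps xs unfolding hom_def subalg_def by auto
    moreover have "q (ops A f ?xs) = ops C f (map q ?xs)"
      using q ps xs unfolding hom_def by simp
    ultimately show "?\<phi> (ops (subalg B (\<psi> ` carrier A)) f ps) = ops C f (map ?\<phi> ps)"
      using factor by (simp add: comp_def)
  qed
qed

lemma carrier_quot_alg: "carrier (quot_alg A \<theta>) = (\<lambda>x. \<theta> `` {x}) ` carrier A"
  by (auto simp: quot_alg_def quotient_def)

lemma algebra_quot_alg:
  assumes "equiv (carrier A) \<theta>" "algebra ar A"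
  shows "algebra ar (quot_alg A \<theta>)"
  unfolding algebra_def
proof (intro allI impI)
  fix f Cs assume Cs: "length Cs = ar f \<and> set Cs \<subseteq> carrier (quot_alg A \<theta>)"
  have "(SOME x. x \<in> C) \<in> carrier A" if "C \<in> carrier A // \<theta>" for C
    using that assms(1) in_quotient_imp_non_empty in_quotient_imp_subset
    by (metis some_in_eq subsetD)
  then have "set (map (\<lambda>C. SOME x. x \<in> C) Cs) \<subseteq> carrier A"
    using Cs by (auto simp: quot_alg_def)
  then show "ops (quot_alg A \<theta>) f Cs \<in> carrier (quot_alg A \<theta>)"
    using assms(2) Cs unfolding algebra_def by (simp add: quot_alg_def quotientI)
qed

lemma hom_quot_map:
  assumes "congruence ar A \<theta>"
  shows "hom ar A (quot_alg A \<theta>) (\<lambda>x. \<theta> `` {x})"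
  unfolding hom_def
proof (intro conjI ballI allI impI)
  have equiv: "equiv (carrier A) \<theta>" using assms by (simp add: congruence_def)
  fix f xs assume xs: "length xs = ar f \<and> set xs \<subseteq> carrier A"
  let ?reps = "map (\<lambda>C. SOME x. x \<in> C) (map (\<lambda>x. \<theta> `` {x}) xs)"
  have "(x, SOME y. y \<in> \<theta> `` {x}) \<in> \<theta>" if "x \<in> carrier A" for x
    using that equiv equiv_class_self by (metis Image_singleton_iff someI)
  then have "list_all2 (\<lambda>x y. (x, y) \<in> \<theta>) xs ?reps"
    using xs by (auto simp: list_all2_map2 list_all2_same)
  then have "(ops A f xs, ops A f ?reps) \<in> \<theta>"
    using assms xs by (simp add: congruence_def)
  then show "\<theta> `` {ops A f xs} = ops (quot_alg A \<theta>) f (map (\<lambda>x. \<theta> `` {x}) xs)"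
    using equiv by (simp add: quot_alg_def equiv_class_eq)
qed (simp add: quot_alg_def quotientI)

lemma ker_quot_map: "equiv (carrier A) \<theta> \<Longrightarrow> ker A (\<lambda>x. \<theta> `` {x}) = \<theta>"
  unfolding ker_def by (auto simp: equiv_class_eq_iff)

lemma equiv_ker: "equiv (carrier A) (ker A \<psi>)"
  unfolding equiv_def refl_on_def sym_def trans_def ker_def by auto

lemma congruence_ker:
  assumes "hom ar A B \<psi>" "algebra ar A"
  shows "congruence ar A (ker A \<psi>)"
  unfolding congruence_def
proof (intro conjI allI impI)
  show "equiv (carrier A) (ker A \<psi>)"
    by (rule equiv_ker)
  fix f xs ys assume "length xs = ar f \<and> list_all2 (\<lambda>x y. (x, y) \<in> ker A \<psi>) xs ys"
  then have "length xs = ar f" "length ys = ar f" "set xs \<subseteq> carrier A" "set ys \<subseteq> carrier A"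
    and "map \<psi> xs = map \<psi> ys"
    by (auto simp: ker_def list_all2_conv_all_nth in_set_conv_nth list_eq_iff_nth_eq)
  then show "(ops A f xs, ops A f ys) \<in> ker A \<psi>"
    using assms unfolding hom_def algebra_def ker_def by auto
qed

lemma iso_quot_ker:
  assumes \<psi>: "hom ar A B \<psi>" and "algebra ar A"
  shows "iso ar (quot_alg A (ker A \<psi>)) (subalg B (\<psi> ` carrier A))"
proof -
  let ?Q = "quot_alg A (ker A \<psi>)" and ?q = "\<lambda>x. ker A \<psi> `` {x}"
  have cong: "congruence ar A (ker A \<psi>)" by (rule congruence_ker[OF assms])
  then have ker_q: "ker A ?q = ker A \<psi>"
    by (simp add: congruence_def ker_quot_map)
  have "subalg ?Q (?q ` carrier A) = ?Q"
    by (metis carrier_quot_alg subalg_carrier)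
  then obtain \<phi> where \<phi>: "hom ar ?Q (subalg B (\<psi> ` carrier A)) \<phi>"
    and \<phi>_q: "\<And>x. x \<in> carrier A \<Longrightarrow> \<phi> (?q x) = \<psi> x"
    using hom_factor_through_image[OF hom_quot_map[OF cong] hom_onto_image[OF \<psi>] \<open>algebra ar A\<close>]
      ker_q by auto
  have "inj_on \<phi> (carrier ?Q)"
  proof (rule inj_onI)
    fix C D assume "C \<in> carrier ?Q" "D \<in> carrier ?Q" "\<phi> C = \<phi> D"
    moreover obtain x y where "x \<in> carrier A" "y \<in> carrier A" "C = ?q x" "D = ?q y"
      using \<open>C \<in> carrier ?Q\<close> \<open>D \<in> carrier ?Q\<close> unfolding carrier_quot_alg by blast
    ultimately have "x \<in> carrier A" "y \<in> carrier A" "C = ?q x" "D = ?q y" "\<psi> x = \<psi> y"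
      using \<phi>_q by auto
    then show "C = D" using ker_q unfolding ker_def by blast
  qed
  moreover have "\<phi> ` carrier ?Q = \<psi> ` carrier A"
    unfolding carrier_quot_alg image_image using \<phi>_q by (rule image_cong[OF HOL.refl])
  ultimately show ?thesis
    using \<phi> unfolding iso_def bij_betw_def by (auto simp: subalg_def)
qed

definition retract :: "('f \<Rightarrow> nat) \<Rightarrow> ('f, 'a) alg \<Rightarrow> ('f, 'b) alg \<Rightarrow> bool" where
  "retract ar A B \<longleftrightarrow> (\<exists>i j. hom ar A B i \<and> hom ar B A j \<and> (\<forall>x\<in>carrier A. j (i x) = x))"

lemma projective_iff_retract:
  "projective ar Eqs P \<longleftrightarrow> algebra ar P \<and> (\<exists>Y :: 'a set. retract ar P (free_alg ar Eqs Y))"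
  for P :: "('f, 'a) alg"
  by (simp add: projective_def retract_def)

lemma retract_trans: "retract ar A B \<Longrightarrow> retract ar B C \<Longrightarrow> retract ar A C"
proof -
  assume "retract ar A B" "retract ar B C"
  then obtain i j i' j' where "hom ar A B i" "hom ar B A j" "\<forall>x\<in>carrier A. j (i x) = x"
    and "hom ar B C i'" "hom ar C B j'" "\<forall>x\<in>carrier B. j' (i' x) = x"
    unfolding retract_def by blast
  moreover from this have "\<forall>x\<in>carrier A. j (j' (i' (i x))) = x"
    by (simp add: hom_def)
  ultimately show "retract ar A C"
    unfolding retract_def by (blast intro: hom_comp)
qed

lemma retract_of_iso:
  assumes "iso ar A B" "algebra ar A"
  shows "retract ar B A"
proof -
  obtain \<phi> where \<phi>: "hom ar A B \<phi>" "bij_betw \<phi> (carrier A) (carrier B)"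
    using assms(1) by (auto simp: iso_def)
  let ?\<phi>' = "inv_into (carrier A) \<phi>"
  have "hom ar B A ?\<phi>'"
    unfolding hom_def
  proof (intro conjI ballI allI impI)
    fix y assume "y \<in> carrier B"
    then show "?\<phi>' y \<in> carrier A"
      using \<phi>(2) by (auto simp: bij_betw_def inv_into_into)
  next
    fix f ys assume ys: "length ys = ar f \<and> set ys \<subseteq> carrier B"
    let ?xs = "map ?\<phi>' ys"
    have xs: "map \<phi> ?xs = ys" "set ?xs \<subseteq> carrier A"
      using ys \<phi>(2) map_inv_into[of ys \<phi> "carrier A"] by (auto simp: bij_betw_def)
    then have "ops B f ys = \<phi> (ops A f ?xs)" "ops A f ?xs \<in> carrier A"
      using \<phi>(1) assms(2) ys unfolding hom_def algebra_def by auto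
    then show "?\<phi>' (ops B f ys) = ops A f (map ?\<phi>' ys)"
      using \<phi>(2) by (simp add: bij_betw_def inv_into_f_f)
  qed
  moreover have "\<forall>y\<in>carrier B. \<phi> (?\<phi>' y) = y"
    using \<phi>(2) by (simp add: bij_betw_def f_inv_into_f)
  ultimately show ?thesis
    using \<phi>(1) unfolding retract_def by blast
qed

lemma ker_comp_retraction:
  assumes "hom ar A P g" "\<forall>x\<in>carrier P. j (i x) = x"
  shows "ker A (\<lambda>x. i (g x)) = ker A g"
  using assms unfolding ker_def hom_def by (auto dest: arg_cong[where f=j])

lemma retract_free_alg_rename:
  assumes "inj_on \<beta> Y"
  shows "retract ar (free_alg ar Eqs Y) (free_alg ar Eqs (\<beta> ` Y))"
proof -
  let ?i = "subst_hom ar Eqs (\<beta> ` Y) (\<lambda>y. Var (\<beta> y))"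
    and ?j = "subst_hom ar Eqs Y (\<lambda>y. Var (inv_into Y \<beta> y))"
  have "hom ar (free_alg ar Eqs Y) (free_alg ar Eqs (\<beta> ` Y)) ?i"
    and "hom ar (free_alg ar Eqs (\<beta> ` Y)) (free_alg ar Eqs Y) ?j"
    by (auto intro!: hom_subst_hom Var_in_free_terms inv_into_into)
  moreover have "?j (?i x) = x" if x: "x \<in> carrier (free_alg ar Eqs Y)" for x
  proof -
    obtain u where u: "u \<in> free_terms ar Y" "x = fclass ar Eqs Y u"
      using x by (auto simp: carrier_free_alg)
    then have "subst (\<lambda>y. Var (\<beta> y)) u \<in> free_terms ar (\<beta> ` Y)"
      by (auto intro: subst_in_free_terms Var_in_free_terms)
    then show ?thesis
      using u assms
      by (auto simp: subst_hom_fclass Var_in_free_terms inv_into_into subst_rename_inverse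
          free_terms_def)
  qed
  ultimately show ?thesis
    unfolding retract_def by blast
qed

lemma free_alg_lift:
  assumes j: "hom ar (free_alg ar Eqs Y) A j" and q: "hom ar (free_alg ar Eqs Z) A q"
    and onto: "carrier A \<subseteq> q ` carrier (free_alg ar Eqs Z)"
  obtains k where "hom ar (free_alg ar Eqs Y) (free_alg ar Eqs Z) k"
    and "\<And>w. w \<in> carrier (free_alg ar Eqs Y) \<Longrightarrow> q (k w) = j w"
proof -
  have "\<exists>s. wf_trm ar s \<and>
      (y \<in> Y \<longrightarrow> s \<in> free_terms ar Z \<and> q (fclass ar Eqs Z s) = j (fclass ar Eqs Y (Var y)))" for y
  proof (cases "y \<in> Y")
    case True
    then have "j (fclass ar Eqs Y (Var y)) \<in> carrier A"
      using j by (auto simp: hom_def carrier_free_alg Var_in_free_terms)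
    then obtain s where "s \<in> free_terms ar Z" "q (fclass ar Eqs Z s) = j (fclass ar Eqs Y (Var y))"
      using onto by (auto simp: carrier_free_alg)
    then show ?thesis by (auto simp: free_terms_def)
  qed (auto intro: exI[of _ "Var undefined"])
  then obtain \<sigma> where \<sigma>: "\<And>y. wf_trm ar (\<sigma> y)"
    "\<And>y. y \<in> Y \<Longrightarrow> \<sigma> y \<in> free_terms ar Z \<and> q (fclass ar Eqs Z (\<sigma> y)) = j (fclass ar Eqs Y (Var y))"
    by metis
  let ?k = "subst_hom ar Eqs Z \<sigma>"
  have k: "hom ar (free_alg ar Eqs Y) (free_alg ar Eqs Z) ?k"
    using \<sigma> by (intro hom_subst_hom) auto
  have "q (?k w) = j w" if "w \<in> carrier (free_alg ar Eqs Y)" for w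
  proof (rule free_alg_hom_eqI[OF hom_comp[OF k q] j _ that])
    fix y assume "y \<in> Y"
    then show "q (?k (fclass ar Eqs Y (Var y))) = j (fclass ar Eqs Y (Var y))"
      using \<sigma> by (simp add: subst_hom_fclass Var_in_free_terms)
  qed
  with k that show ?thesis by blast
qed

lemma retract_free_alg_if_projective:
  fixes A :: "('f, 'a) alg"
  assumes "projective ar Eqs A" and q: "hom ar (free_alg ar Eqs Z) A q"
    and onto: "carrier A \<subseteq> q ` carrier (free_alg ar Eqs Z)"
  shows "retract ar A (free_alg ar Eqs Z)"
proof -
  obtain Y :: "'a set" and i j where i: "hom ar A (free_alg ar Eqs Y) i"
    and j: "hom ar (free_alg ar Eqs Y) A j" and ji: "\<forall>a\<in>carrier A. j (i a) = a"
    using assms(1) by (auto simp: projective_def)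
  obtain k where k: "hom ar (free_alg ar Eqs Y) (free_alg ar Eqs Z) k"
    and qk: "\<And>w. w \<in> carrier (free_alg ar Eqs Y) \<Longrightarrow> q (k w) = j w"
    using free_alg_lift[OF j q onto] by blast
  have "\<forall>a\<in>carrier A. q (k (i a)) = a"
    using i ji qk by (simp add: hom_def)
  then show ?thesis
    using hom_comp[OF i k] q unfolding retract_def by blast
qed

section \<open>The free algebra on one generator\<close>

abbreviation Fz_gen
    :: "('f \<Rightarrow> nat) \<Rightarrow> (('f, nat) trm \<times> ('f, nat) trm) set \<Rightarrow> ('f, unit) trm set" where
  "Fz_gen ar Eqs \<equiv> fclass ar Eqs UNIV (Var ())"

lemma Fz_gen_in_carrier: "Fz_gen ar Eqs \<in> carrier (Fz ar Eqs)"
  by (simp add: Fz_def carrier_free_alg Var_in_free_terms)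

lemma algebra_Fz: "algebra ar (Fz ar Eqs)"
  by (simp add: Fz_def algebra_free_alg)

lemma Sg_Fz_gen_image:
  assumes \<psi>: "hom ar (Fz ar Eqs) B \<psi>"
  shows "Sg ar B {\<psi> (Fz_gen ar Eqs)} = \<psi> ` carrier (Fz ar Eqs)"
    and "Sg ar (subalg B (\<psi> ` carrier (Fz ar Eqs))) {\<psi> (Fz_gen ar Eqs)} =
      \<psi> ` carrier (Fz ar Eqs)"
proof -
  let ?I = "\<psi> ` carrier (Fz ar Eqs)"
  have closed: "closed ar B ?I"
    by (rule closed_hom_image[OF \<psi> algebra_Fz])
  have gen: "{\<psi> (Fz_gen ar Eqs)} \<subseteq> ?I"
    using Fz_gen_in_carrier by blast
  have least: "?I \<subseteq> S" if "{\<psi> (Fz_gen ar Eqs)} \<subseteq> S" "closed ar B S" for S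
    using that free_alg_image_subset[of ar Eqs UNIV B \<psi> S] \<psi> by (auto simp: Fz_def)
  have "?I \<subseteq> carrier B"
    using \<psi> by (auto simp: hom_def)
  then show "Sg ar B {\<psi> (Fz_gen ar Eqs)} = ?I"
    using closed gen least by (intro Sg_eqI)
  show "Sg ar (subalg B ?I) {\<psi> (Fz_gen ar Eqs)} = ?I"
    using closed gen least by (intro Sg_eqI) (simp_all add: closed_subalg_iff)
qed

lemma hom_Fz_free_alg_eval:
  assumes \<phi>: "hom ar (Fz ar Eqs) (free_alg ar Eqs Y) \<phi>"
    and t: "t \<in> free_terms ar Y" "\<phi> (Fz_gen ar Eqs) = fclass ar Eqs Y t"
    and s: "s \<in> free_terms ar UNIV"
  shows "\<phi> (fclass ar Eqs UNIV s) = fclass ar Eqs Y (subst (\<lambda>_. t) s)"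
proof -
  have wf: "wf_trm ar t" using t(1) by (simp add: free_terms_def)
  have "\<phi> (fclass ar Eqs UNIV s) = subst_hom ar Eqs Y (\<lambda>_. t) (fclass ar Eqs UNIV s)"
  proof (rule free_alg_hom_eqI[where \<phi> = \<phi>])
    show "hom ar (free_alg ar Eqs UNIV) (free_alg ar Eqs Y) \<phi>"
      using \<phi> by (simp add: Fz_def)
    show "hom ar (free_alg ar Eqs UNIV) (free_alg ar Eqs Y) (subst_hom ar Eqs Y (\<lambda>_. t))"
      using t wf by (intro hom_subst_hom) auto
    show "\<phi> (fclass ar Eqs UNIV (Var y)) =
        subst_hom ar Eqs Y (\<lambda>_. t) (fclass ar Eqs UNIV (Var y))" if "y \<in> UNIV" for y :: unit
      using t wf by (simp add: subst_hom_fclass Var_in_free_terms)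
    show "fclass ar Eqs UNIV s \<in> carrier (free_alg ar Eqs UNIV)"
      using s by (simp add: carrier_free_alg)
  qed
  also have "\<dots> = fclass ar Eqs Y (subst (\<lambda>_. t) s)"
    using t wf s by (simp add: subst_hom_fclass)
  finally show ?thesis .
qed

lemma hom_Fz_finite_free_alg_same_ker:
  assumes \<phi>: "hom ar (Fz ar Eqs) (free_alg ar Eqs Y) \<phi>"
  obtains Y0 :: "nat set" and \<psi> where "finite Y0" "hom ar (Fz ar Eqs) (free_alg ar Eqs Y0) \<psi>"
    "ker (Fz ar Eqs) \<psi> = ker (Fz ar Eqs) \<phi>"
proof -
  have "\<phi> (Fz_gen ar Eqs) \<in> carrier (free_alg ar Eqs Y)"
    using \<phi> Fz_gen_in_carrier by (auto simp: hom_def)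
  then obtain t where t: "t \<in> free_terms ar Y" "\<phi> (Fz_gen ar Eqs) = fclass ar Eqs Y t"
    by (auto simp: carrier_free_alg)
  obtain \<beta> :: "_ \<Rightarrow> nat" where \<beta>: "inj_on \<beta> (vars t)"
    using finite_imp_inj_to_nat_seg[OF finite_vars[of t]] by blast
  let ?Y0 = "\<beta> ` vars t" and ?rename = "subst (\<lambda>v. Var (\<beta> v))"
  have rename: "?rename (subst (\<lambda>_. t) s) \<in> free_terms ar ?Y0"
    "vars (subst (\<lambda>_. t) s) \<subseteq> vars t" "subst (\<lambda>_. t) s \<in> free_terms ar Y"
    if "s \<in> free_terms ar UNIV" for s
    using that t(1) by (auto simp: free_terms_def vars_subst intro!: wf_trm_subst)
  let ?\<psi> = "subst_hom ar Eqs ?Y0 (\<lambda>_. ?rename t)"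
  have t': "?rename t \<in> free_terms ar ?Y0" "wf_trm ar (?rename t)"
    using rename[of "Var ()"] by (simp_all add: free_terms_def Var_in_free_terms)
  have \<psi>: "hom ar (Fz ar Eqs) (free_alg ar Eqs ?Y0) ?\<psi>"
    unfolding Fz_def using t' by (intro hom_subst_hom) auto
  have \<psi>_eval: "?\<psi> (fclass ar Eqs UNIV s) = fclass ar Eqs ?Y0 (?rename (subst (\<lambda>_. t) s))"
    if "s \<in> free_terms ar UNIV" for s
    using that t' by (simp add: subst_hom_fclass subst_subst)
  have "?\<psi> x = ?\<psi> x' \<longleftrightarrow> \<phi> x = \<phi> x'"
    if x: "x \<in> carrier (Fz ar Eqs)" "x' \<in> carrier (Fz ar Eqs)" for x x'
  proof -
    obtain s s' where s: "s \<in> free_terms ar UNIV" "x = fclass ar Eqs UNIV s"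
      and s': "s' \<in> free_terms ar UNIV" "x' = fclass ar Eqs UNIV s'"
      using x by (auto simp: Fz_def carrier_free_alg)
    show ?thesis
      using s s' rename[OF s(1)] rename[OF s'(1)] \<beta>
      by (simp add: \<psi>_eval hom_Fz_free_alg_eval[OF \<phi> t] fclass_eq_iff eqcons_rename_iff)
  qed
  then have "ker (Fz ar Eqs) ?\<psi> = ker (Fz ar Eqs) \<phi>"
    unfolding ker_def by auto
  moreover have "finite ?Y0"
    by (simp add: finite_vars)
  ultimately show ?thesis
    using \<psi> that by blast
qed

lemma exact_cong_ker:
  assumes "hom ar (Fz ar Eqs) (free_alg ar Eqs Y) \<phi>"
  shows "exact_cong ar Eqs (ker (Fz ar Eqs) \<phi>)"
proof -
  obtain Y0 :: "nat set" and \<psi> where "finite Y0"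
    and \<psi>: "hom ar (Fz ar Eqs) (free_alg ar Eqs Y0) \<psi>"
    and ker: "ker (Fz ar Eqs) \<psi> = ker (Fz ar Eqs) \<phi>"
    using hom_Fz_finite_free_alg_same_ker[OF assms] by blast
  have "iso ar (quot_alg (Fz ar Eqs) (ker (Fz ar Eqs) \<phi>))
      (subalg (free_alg ar Eqs Y0) (Sg ar (free_alg ar Eqs Y0) {\<psi> (Fz_gen ar Eqs)}))"
    using iso_quot_ker[OF \<psi> algebra_Fz] Sg_Fz_gen_image(1)[OF \<psi>] ker by simp
  moreover have "algebra ar (quot_alg (Fz ar Eqs) (ker (Fz ar Eqs) \<phi>))"
    by (rule algebra_quot_alg[OF equiv_ker algebra_Fz])
  moreover have "{\<psi> (Fz_gen ar Eqs)} \<subseteq> carrier (free_alg ar Eqs Y0)"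
    using \<psi> Fz_gen_in_carrier by (auto simp: hom_def)
  ultimately show ?thesis
    unfolding exact_cong_def exact_def using \<open>finite Y0\<close> by blast
qed

section \<open>G-congruences\<close>

lemma G_congs_exact_cong_subset_ker:
  fixes ar :: "'f \<Rightarrow> nat"
  assumes "\<theta> \<in> G_congs ar Eqs m E h"
  shows "exact_cong ar Eqs \<theta>" "\<theta> \<subseteq> ker (Fz ar Eqs) h"
proof -
  obtain g P where \<theta>: "\<theta> = ker (Fz ar Eqs) g" and sol: "solution ar Eqs m E h g P"
    using assms unfolding G_congs_def by blast
  then obtain f where g: "hom ar (Fz ar Eqs) P g" and "projective ar Eqs P"
    and fg: "\<forall>x\<in>carrier (Fz ar Eqs). f (g x) = h x"
    by (auto simp: solution_def)
  then obtain Y :: "('f, nat) trm set set" and i j where i: "hom ar P (free_alg ar Eqs Y) i"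
    and ji: "\<forall>x\<in>carrier P. j (i x) = x"
    by (auto simp: projective_def)
  show "exact_cong ar Eqs \<theta>"
    using exact_cong_ker[OF hom_comp[OF g i]] ker_comp_retraction[where i = i, OF g ji] \<theta>
    by simp
  show "\<theta> \<subseteq> ker (Fz ar Eqs) h"
    using fg unfolding \<theta> ker_def by (auto, metis)
qed

lemma projective_cong_in_G_congs:
  fixes ar :: "'f \<Rightarrow> nat"
  assumes \<theta>: "congruence ar (Fz ar Eqs) \<theta>" and "projective_cong ar Eqs \<theta>"
    and h: "hom ar (Fz ar Eqs) (prod_alg m E) h" and "\<theta> \<subseteq> ker (Fz ar Eqs) h"
  shows "\<theta> \<in> G_congs ar Eqs m E h"
proof -
  let ?A = "quot_alg (Fz ar Eqs) \<theta>" and ?q = "\<lambda>x. \<theta> `` {x}"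
  have equiv: "equiv (carrier (Fz ar Eqs)) \<theta>"
    using \<theta> by (simp add: congruence_def)
  have q: "hom ar (Fz ar Eqs) ?A ?q"
    by (rule hom_quot_map[OF \<theta>])
  obtain Y :: "('f, unit) trm set set set" and i j where i: "hom ar ?A (free_alg ar Eqs Y) i"
    and ji: "\<forall>a\<in>carrier ?A. j (i a) = a"
    using \<open>projective_cong ar Eqs \<theta>\<close> by (auto simp: projective_cong_def projective_def)
  have "ker (Fz ar Eqs) (\<lambda>x. i (?q x)) = \<theta>"
    using ker_comp_retraction[where i = i, OF q ji] ker_quot_map[OF equiv] by simp
  then obtain Y0 :: "nat set" and \<psi> where \<psi>: "hom ar (Fz ar Eqs) (free_alg ar Eqs Y0) \<psi>"
    and ker_\<psi>: "ker (Fz ar Eqs) \<psi> = \<theta>"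
    using hom_Fz_finite_free_alg_same_ker[OF hom_comp[OF q i]] by metis
  let ?P = "subalg (free_alg ar Eqs Y0) (\<psi> ` carrier (Fz ar Eqs))"
  have "retract ar ?P ?A"
    using retract_of_iso[OF iso_quot_ker[OF \<psi> algebra_Fz]] ker_\<psi>
      algebra_quot_alg[OF equiv algebra_Fz]
    by simp
  moreover have "retract ar ?A (Fz ar Eqs)"
    using retract_free_alg_if_projective[of ar Eqs ?A UNIV ?q] \<open>projective_cong ar Eqs \<theta>\<close> q
    by (simp add: projective_cong_def Fz_def carrier_quot_alg)
  \<comment> \<open>\<open>projective\<close> wants generators of the carrier type of \<open>P\<close>, so re-index \<open>F(z)\<close> by \<open>{{}}\<close>.\<close>
  moreover have "retract ar (Fz ar Eqs) (free_alg ar Eqs {{} :: ('f, nat) trm set})"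
    using retract_free_alg_rename[of "\<lambda>_. {}" "UNIV :: unit set" ar Eqs]
    by (simp add: Fz_def inj_def)
  moreover have "algebra ar ?P"
    by (rule algebra_subalg[OF closed_hom_image[OF \<psi> algebra_Fz]])
  ultimately have "projective ar Eqs ?P"
    unfolding projective_iff_retract by (blast intro: retract_trans)
  moreover have "fin_gen ar ?P"
    unfolding fin_gen_def using Sg_Fz_gen_image(2)[OF \<psi>] Fz_gen_in_carrier[of ar Eqs]
    by (intro exI[of _ "{\<psi> (Fz_gen ar Eqs)}"]) auto
  moreover obtain f where "hom ar ?P (prod_alg m E) f"
    and "\<And>x. x \<in> carrier (Fz ar Eqs) \<Longrightarrow> f (\<psi> x) = h x"
    using hom_factor_through_image[OF \<psi> h algebra_Fz] ker_\<psi> \<open>\<theta> \<subseteq> ker (Fz ar Eqs) h\<close> by metis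
  ultimately have "solution ar Eqs m E h \<psi> ?P"
    unfolding solution_def using hom_onto_image[OF \<psi>] by blast
  then show ?thesis
    using ker_\<psi> unfolding G_congs_def by blast
qed

theorem theorem4p6:
  fixes ar :: "'f \<Rightarrow> nat"
    and Eqs :: "(('f, nat) trm \<times> ('f, nat) trm) set"
    and m :: nat
    and E :: "nat \<Rightarrow> ('f, 'e) alg"
    and h :: "('f, unit) trm set \<Rightarrow> nat \<Rightarrow> 'e"
    and \<theta> :: "(('f, unit) trm set \<times> ('f, unit) trm set) set"
  assumes "variety ar Eqs"
    and "egen_problem ar Eqs m E h"
    and "congruence ar (Fz ar Eqs) \<theta>"
  shows "(\<theta> \<in> G_congs ar Eqs m E h \<longrightarrow>
            exact_cong ar Eqs \<theta> \<and> \<theta> \<subseteq> ker (Fz ar Eqs) h)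
       \<and> (projective_cong ar Eqs \<theta> \<and> \<theta> \<subseteq> ker (Fz ar Eqs) h \<longrightarrow>
            \<theta> \<in> G_congs ar Eqs m E h)"
proof -
  have "hom ar (Fz ar Eqs) (prod_alg m E) h"
    using assms(2) by (simp add: egen_problem_def)
  then show ?thesis
    using G_congs_exact_cong_subset_ker projective_cong_in_G_congs[OF assms(3)] by blast
qed

end
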